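(* Let $(Q_N)_{N\ge1}$ be random finite Borel measures on $\mathbb{R}^d$ such that: (i) for every finite family of Borel sets $A_1,\dots,A_p$, $\lim_{N\to\infty}\frac1N\mathbb{E}\big[|\log Q_N(\bigcup_rA_r)-\max_r\mathbb{E}\log Q_N(A_r)|\big]=0$; (ii) for every $\Lambda\in\mathbb{R}^d$ the limit $I(\Lambda)=\lim_{N\to\infty}\frac1N\mathbb{E}[\log L_N(\Lambda)]$ exists in $[-\infty,+\infty]$, where $L_N(\Lambda)=\int e^{N\langle x,\Lambda\rangle}dQ_N(x)$; (iii) $0$ lies in the interior of $\mathcal{D}(I)=\{\Lambda:I(\Lambda)<+\infty\}$. Then for every closed set $\mathcal{V}\subset\mathbb{R}^d$, $$\limsup_{N\to\infty}\frac1N\mathbb{E}[\log Q_N(\mathcal{V})]\le\sup_{x\in\mathcal{V}}I^*(x),\qquad I^*(x)=\inf_{\Lambda\in\mathbb{R}^d}\big[-\langle x,\Lambda\rangle+I(\Lambda)\big].$$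
   Context: Convention $\log0=-\infty$. *)

theory Defs
  imports "HOL-Analysis.Analysis" "HOL-Probability.Probability"
begin

definition elog :: "ennreal \<Rightarrow> ereal" where
  "elog x = (if x = 0 then -\<infinity> else if x = \<top> then \<infinity> else ereal (ln (enn2real x)))"

text \<open>Expectation of an extended-real random variable: E[X+] - E[X-].\<close>
definition EE :: "'w measure \<Rightarrow> ('w \<Rightarrow> ereal) \<Rightarrow> ereal" where
  "EE P X = enn2ereal (\<integral>\<^sup>+ w. e2ennreal (X w) \<partial>P) - enn2ereal (\<integral>\<^sup>+ w. e2ennreal (- X w) \<partial>P)"

definition edist :: "ereal \<Rightarrow> ereal \<Rightarrow> ereal" where
  "edist a b = (if a = b then 0 else \<bar>a - b\<bar>)"

definition LN :: "nat \<Rightarrow> 'a::euclidean_space measure \<Rightarrow> 'a \<Rightarrow> ennreal" where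
  "LN N Q \<Lambda> = (\<integral>\<^sup>+ x. ennreal (exp (real N * (x \<bullet> \<Lambda>))) \<partial>Q)"

definition Istar :: "('a::euclidean_space \<Rightarrow> ereal) \<Rightarrow> 'a \<Rightarrow> ereal" where
  "Istar I x = (INF \<Lambda>. - ereal (x \<bullet> \<Lambda>) + I \<Lambda>)"

end

theory Submission
  imports Defs
begin

(*
  Fix B > sup_{x in V} I*(x).  We cover V by finitely many closed half-spaces
  H(Lambda,a) = {y. a <= <y,Lambda>} with I(Lambda) < B + a:
   - outside a large box, the 2d half-spaces {<y, +-d e_i> >= d M} suffice, because all
     Lambda = +-d e_i lie in the domain of I (exponential tightness, uses hypothesis (iii));
   - the compact rest of V is covered by finitely many of the open half-spaces
     {<y,Lambda> > a} with I*(x) < B, given by the definition of I*.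
  The exponential Chebyshev inequality Q_N(H(Lambda,a)) <= exp(-N a) L_N(Lambda), together with
  hypothesis (ii), bounds (1/N) E log Q_N(H) eventually by B for every such half-space, and
  hypothesis (i) turns the bounds on the finitely many pieces into a bound on their union.
  Since B > sup I* is arbitrary, the theorem follows.
*)

lemma elog_measurable[measurable]: "elog \<in> borel_measurable borel"
  unfolding elog_def by measurable

lemma elog_mono:
  assumes le: "x \<le> y"
  shows "elog x \<le> elog y"
proof -
  consider "x = 0" | "y = \<top>" | "x \<noteq> 0" "y \<noteq> \<top>" by blast
  then show ?thesis
  proof cases
    case 3
    then have "0 < enn2real x" "enn2real x \<le> enn2real y" "x \<noteq> \<top>" "y \<noteq> 0"
      using le by (auto simp: enn2real_positive_iff less_top[symmetric] top_unique
                        zero_less_iff_neq_zero intro!: enn2real_mono)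
    then show ?thesis using 3 by (simp add: elog_def)
  qed (auto simp: elog_def)
qed

lemma elog_cmult: "c > 0 \<Longrightarrow> elog (ennreal c * x) = ereal (ln c) + elog x"
  unfolding elog_def
  by (auto simp: ennreal_mult_eq_top_iff enn2real_mult ln_mult enn2real_positive_iff enn2real_eq_0_iff)

lemma EE_mono:
  assumes "\<And>w. w \<in> space P \<Longrightarrow> X w \<le> Y w"
  shows "EE P X \<le> EE P Y"
  unfolding EE_def
proof (rule ereal_minus_mono)
  show "enn2ereal (\<integral>\<^sup>+ w. e2ennreal (X w) \<partial>P) \<le> enn2ereal (\<integral>\<^sup>+ w. e2ennreal (Y w) \<partial>P)"
    unfolding less_eq_ennreal.rep_eq[symmetric]
    using assms by (auto intro!: nn_integral_mono e2ennreal_mono)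
  show "enn2ereal (\<integral>\<^sup>+ w. e2ennreal (- Y w) \<partial>P) \<le> enn2ereal (\<integral>\<^sup>+ w. e2ennreal (- X w) \<partial>P)"
    unfolding less_eq_ennreal.rep_eq[symmetric]
    using assms by (auto intro!: nn_integral_mono e2ennreal_mono)
qed

lemma EE_nonneg: "(\<And>w. D w \<ge> 0) \<Longrightarrow> EE P D = enn2ereal (\<integral>\<^sup>+ w. e2ennreal (D w) \<partial>P)"
  unfolding EE_def by (simp add: e2ennreal_neg zero_ennreal.rep_eq)

text \<open>
  The positive
  and negative parts of Y + c differ from those of Y by at most |c| pointwise, and they
  satisfy an exact balance identity; integrating gives the corresponding facts for the four
  integrals, from which the identity follows by case analysis on infinite values.
\<close>

lemma ennreal_max0: "ennreal t = ennreal (max t 0)"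
  by (cases "t \<ge> 0") (auto simp: ennreal_neg max_def)

lemma ennreal_add_max: "ennreal a + ennreal b = ennreal (max a 0 + max b 0)"
  by (subst ennreal_plus) (auto simp: ennreal_max0[symmetric])

lemma e2ennreal_shift_balance:
  "e2ennreal (Y + ereal c) + e2ennreal (- Y) + ennreal (- c)
    = e2ennreal (- (Y + ereal c)) + e2ennreal Y + ennreal c"
proof (cases Y)
  case (real r)
  have "ennreal (r + c) + ennreal (- r) + ennreal (- c)
      = ennreal (max (r + c) 0 + max (- r) 0 + max (- c) 0)"
    by (subst ennreal_plus, simp, simp)+ (simp add: ennreal_max0[symmetric])
  also have "\<dots> = ennreal (max (- (r + c)) 0 + max r 0 + max c 0)"
    by (rule arg_cong[where f = ennreal]) linarith
  also have "\<dots> = ennreal (- (r + c)) + ennreal r + ennreal c"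
    by (subst ennreal_plus, simp, simp)+ (simp add: ennreal_max0[symmetric])
  finally show ?thesis using real by simp
qed simp_all

lemma e2ennreal_shift_bounds:
  "e2ennreal (Y + ereal c) \<le> e2ennreal Y + ennreal c"
  "e2ennreal Y \<le> e2ennreal (Y + ereal c) + ennreal (- c)"
  "e2ennreal (- (Y + ereal c)) \<le> e2ennreal (- Y) + ennreal (- c)"
  "e2ennreal (- Y) \<le> e2ennreal (- (Y + ereal c)) + ennreal c"
  by (cases Y; simp add: ennreal_add_max del: ennreal_plus)+

lemma ennreal_balance_diff:
  fixes A A' B B' :: ennreal
  assumes bal: "A + B' + ennreal (- c) = A' + B + ennreal c"
    and AB: "A \<le> B + ennreal c" "B \<le> A + ennreal (- c)"
    and AB': "A' \<le> B' + ennreal (- c)" "B' \<le> A' + ennreal c"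
  shows "enn2ereal A - enn2ereal A' = enn2ereal B - enn2ereal B' + ereal c"
proof (cases "B = \<top>")
  case True
  then have "A = \<top>" using AB(2) by (auto simp: top_unique)
  then show ?thesis using True by simp
next
  case B: False
  then have A: "A \<noteq> \<top>" using AB(1) by (auto simp: top_unique)
  show ?thesis
  proof (cases "B' = \<top>")
    case True
    then have "A' = \<top>" using AB'(2) by (auto simp: top_unique)
    then show ?thesis using True A B by (cases A; cases B; simp)
  next
    case False
    then have "A' \<noteq> \<top>" using AB'(1) by (auto simp: top_unique)
    then obtain a b a' b' where ab: "A = ennreal a" "B = ennreal b" "A' = ennreal a'" "B' = ennreal b'"
      and nonneg: "0 \<le> a" "0 \<le> b" "0 \<le> a'" "0 \<le> b'"
      using A B False by (cases A; cases B; cases A'; cases B') auto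
    have "ennreal (max a 0 + max b' 0 + max (- c) 0) = ennreal (max a' 0 + max b 0 + max c 0)"
      using bal unfolding ab by (simp add: ennreal_add_max del: ennreal_plus)
    then have "a + b' + max (- c) 0 = a' + b + max c 0"
      using nonneg by (subst (asm) ennreal_inj) auto
    then show ?thesis using ab nonneg by simp
  qed
qed

lemma EE_shift:
  assumes P: "prob_space P" and Y: "Y \<in> borel_measurable P"
  shows "EE P (\<lambda>w. Y w + ereal c) = EE P Y + ereal c"
proof -
  interpret prob_space P by fact
  have int_add: "(\<integral>\<^sup>+ w. f w + g w \<partial>P) = (\<integral>\<^sup>+ w. f w \<partial>P) + (\<integral>\<^sup>+ w. g w \<partial>P)"
    if "f \<in> borel_measurable P" "g \<in> borel_measurable P" for f g :: "'a \<Rightarrow> ennreal"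
    using that by (rule nn_integral_add)
  have int_const: "(\<integral>\<^sup>+ w. f w + ennreal d \<partial>P) = (\<integral>\<^sup>+ w. f w \<partial>P) + ennreal d"
    if "f \<in> borel_measurable P" for f d
    using that by (simp add: nn_integral_add emeasure_space_1)
  have bal: "(\<integral>\<^sup>+ w. e2ennreal (Y w + ereal c) \<partial>P) + (\<integral>\<^sup>+ w. e2ennreal (- Y w) \<partial>P) + ennreal (- c)
      = (\<integral>\<^sup>+ w. e2ennreal (- (Y w + ereal c)) \<partial>P) + (\<integral>\<^sup>+ w. e2ennreal (Y w) \<partial>P) + ennreal c"
    using e2ennreal_shift_balance[of "Y _" c] Y by (simp add: int_add[symmetric] int_const[symmetric])
  \<comment> \<open>the four comparisons of integrals come from integrating the pointwise shift bounds\<close>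
  show ?thesis
    unfolding EE_def
    by (rule ennreal_balance_diff[OF bal])
       (use Y in \<open>subst int_const[symmetric], measurable,
                  auto intro!: nn_integral_mono e2ennreal_shift_bounds\<close>)+
qed

lemma exponential_chebyshev:
  assumes sQ: "sets Q = sets borel"
  shows "emeasure Q {y. a \<le> y \<bullet> \<Lambda>} \<le> ennreal (exp (- (real N * a))) * LN N Q \<Lambda>"
proof -
  have H: "{y. a \<le> y \<bullet> \<Lambda>} \<in> sets Q" unfolding sQ by measurable
  have "emeasure Q {y. a \<le> y \<bullet> \<Lambda>} = (\<integral>\<^sup>+ y. indicator {y. a \<le> y \<bullet> \<Lambda>} y \<partial>Q)"
    using H by simp
  also have "\<dots> \<le> (\<integral>\<^sup>+ y. ennreal (exp (- (real N * a))) * ennreal (exp (real N * (y \<bullet> \<Lambda>))) \<partial>Q)"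
  proof (rule nn_integral_mono)
    fix y
    have "1 \<le> exp (- (real N * a)) * exp (real N * (y \<bullet> \<Lambda>))" if "a \<le> y \<bullet> \<Lambda>"
    proof -
      have "real N * a \<le> real N * (y \<bullet> \<Lambda>)" using that by (simp add: mult_left_mono)
      then show ?thesis by (simp add: exp_add[symmetric])
    qed
    then show "indicator {y. a \<le> y \<bullet> \<Lambda>} y
        \<le> ennreal (exp (- (real N * a))) * ennreal (exp (real N * (y \<bullet> \<Lambda>)))"
      by (auto simp: indicator_def ennreal_mult[symmetric] ennreal_1[symmetric] simp del: ennreal_1)
  qed
  also have "\<dots> = ennreal (exp (- (real N * a))) * LN N Q \<Lambda>"
    unfolding LN_def
    by (rule nn_integral_cmult) (subst measurable_cong_sets[OF sQ refl], measurable)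
  finally show ?thesis .
qed

lemma elog_exponential_chebyshev:
  assumes "sets Q = sets borel"
  shows "elog (emeasure Q {y. a \<le> y \<bullet> \<Lambda>}) + ereal (real N * a) \<le> elog (LN N Q \<Lambda>)"
proof -
  have "elog (emeasure Q {y. a \<le> y \<bullet> \<Lambda>}) \<le> ereal (- (real N * a)) + elog (LN N Q \<Lambda>)"
    using elog_mono[OF exponential_chebyshev[OF assms, of a \<Lambda> N]] by (simp add: elog_cmult)
  then show ?thesis
    by (cases "elog (LN N Q \<Lambda>)"; cases "elog (emeasure Q {y. a \<le> y \<bullet> \<Lambda>})") auto
qed

lemma ereal_div_less_shift:
  "y + ereal (N * a) \<le> x \<Longrightarrow> x / ereal N < ereal (B + a) \<Longrightarrow> (N::real) > 0 \<Longrightarrow> y / ereal N < ereal B"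
  by (cases x; cases y) (auto simp: field_simps)

lemma halfspace_log_mass_bound:
  fixes Q :: "nat \<Rightarrow> 'w \<Rightarrow> 'a::euclidean_space measure"
  assumes prob: "prob_space P"
    and borel_Q: "\<And>N w. N \<ge> 1 \<Longrightarrow> w \<in> space P \<Longrightarrow> sets (Q N w) = sets borel"
    and random_Q: "\<And>N A. N \<ge> 1 \<Longrightarrow> A \<in> sets borel \<Longrightarrow> (\<lambda>w. emeasure (Q N w) A) \<in> borel_measurable P"
    and lim: "(\<lambda>N. EE P (\<lambda>w. elog (LN N (Q N w) \<Lambda>)) / ereal (real N)) \<longlonglongrightarrow> L"
    and less: "L < ereal (B + a)"
  shows "eventually (\<lambda>N. EE P (\<lambda>w. elog (emeasure (Q N w) {y. a \<le> y \<bullet> \<Lambda>})) / ereal (real N)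
           < ereal B) sequentially"
  using order_tendstoD(2)[OF lim less] eventually_ge_at_top[of 1]
proof eventually_elim
  case (elim N)
  let ?X = "EE P (\<lambda>w. elog (LN N (Q N w) \<Lambda>))"
  let ?Y = "EE P (\<lambda>w. elog (emeasure (Q N w) {y. a \<le> y \<bullet> \<Lambda>}))"
  have "{y::'a. a \<le> y \<bullet> \<Lambda>} \<in> sets borel" by measurable
  then have meas: "(\<lambda>w. elog (emeasure (Q N w) {y. a \<le> y \<bullet> \<Lambda>})) \<in> borel_measurable P"
    using random_Q elim(2) by measurable
  have "?Y + ereal (real N * a) = EE P (\<lambda>w. elog (emeasure (Q N w) {y. a \<le> y \<bullet> \<Lambda>}) + ereal (real N * a))"
    by (rule EE_shift[OF prob meas, symmetric])
  also have "\<dots> \<le> ?X"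
    using borel_Q elim(2) by (intro EE_mono elog_exponential_chebyshev)
  finally have "?Y + ereal (real N * a) \<le> ?X" .
  moreover have "?X / ereal (real N) < ereal (B + a)" "real N > 0"
    using elim by auto
  ultimately show ?case
    by (rule ereal_div_less_shift)
qed

text \<open>
  Indeed log Q_N(V) \<le> log Q_N(\<Union>F) is at most
  max_A E log Q_N(A) \<le> N B plus a deviation whose expectation is o(N).
\<close>

lemma edist_bound: "M \<le> ereal m \<Longrightarrow> z \<le> edist z M + ereal m"
  unfolding edist_def by (cases z; cases M) auto

lemma ereal_div_less_imp_le: "(N::real) > 0 \<Longrightarrow> x / ereal N < ereal B \<Longrightarrow> x \<le> ereal (N * B)"
  by (cases x) (auto simp: field_simps)

lemma ereal_div_le_shift:
  "z \<le> x + ereal (N * B) \<Longrightarrow> x / ereal N < ereal e \<Longrightarrow> (N::real) > 0 \<Longrightarrow> z / ereal N \<le> ereal B + ereal e"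
  by (cases x; cases z) (auto simp: field_simps)

lemma union_log_mass_step:
  fixes Q :: "'w \<Rightarrow> 'a::euclidean_space measure" and N :: real
  assumes prob: "prob_space P"
    and borel_Q: "\<And>w. w \<in> space P \<Longrightarrow> sets (Q w) = sets borel"
    and random_union: "(\<lambda>w. emeasure (Q w) (\<Union>F)) \<in> borel_measurable P"
    and F: "finite F" "F \<noteq> {}" "\<Union>F \<in> sets borel"
    and N: "N > 0"
    and pieces: "\<forall>A\<in>F. EE P (\<lambda>w. elog (emeasure (Q w) A)) / ereal N < ereal B"
    and deviation: "enn2ereal (\<integral>\<^sup>+ w. e2ennreal (edist (elog (emeasure (Q w) (\<Union>F)))
                (Max ((\<lambda>A. EE P (\<lambda>w'. elog (emeasure (Q w') A))) ` F))) \<partial>P) / ereal N < ereal e"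
    and V: "V \<in> sets borel" "V \<subseteq> \<Union>F"
  shows "EE P (\<lambda>w. elog (emeasure (Q w) V)) / ereal N \<le> ereal B + ereal e"
proof -
  define M where "M = Max ((\<lambda>A. EE P (\<lambda>w'. elog (emeasure (Q w') A))) ` F)"
  define D where "D = (\<lambda>w. edist (elog (emeasure (Q w) (\<Union>F))) M)"
  have MB: "M \<le> ereal (N * B)"
    unfolding M_def using F pieces N
    by (subst Max_le_iff) (auto intro: ereal_div_less_imp_le)
  have pointwise: "elog (emeasure (Q w) V) \<le> D w + ereal (N * B)" if "w \<in> space P" for w
  proof -
    have "elog (emeasure (Q w) V) \<le> elog (emeasure (Q w) (\<Union>F))"
      using borel_Q[OF that] V F(3) by (intro elog_mono emeasure_mono) auto
    also have "\<dots> \<le> D w + ereal (N * B)"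
      unfolding D_def using MB by (rule edist_bound)
    finally show ?thesis .
  qed
  have D: "D \<in> borel_measurable P"
    unfolding D_def edist_def using random_union by measurable
  have "EE P (\<lambda>w. elog (emeasure (Q w) V)) \<le> EE P (\<lambda>w. D w + ereal (N * B))"
    using pointwise by (rule EE_mono)
  also have "\<dots> = EE P D + ereal (N * B)"
    by (rule EE_shift[OF prob D])
  finally have "EE P (\<lambda>w. elog (emeasure (Q w) V)) \<le> EE P D + ereal (N * B)" .
  moreover have "EE P D / ereal N < ereal e"
    using deviation unfolding D_def M_def by (subst EE_nonneg) (auto simp: edist_def)
  ultimately show ?thesis
    using N by (rule ereal_div_le_shift)
qed

lemma union_log_mass_bound:
  fixes Q :: "nat \<Rightarrow> 'w \<Rightarrow> 'a::euclidean_space measure"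
  assumes prob: "prob_space P"
    and borel_Q: "\<And>N w. N \<ge> 1 \<Longrightarrow> w \<in> space P \<Longrightarrow> sets (Q N w) = sets borel"
    and random_Q: "\<And>N A. N \<ge> 1 \<Longrightarrow> A \<in> sets borel \<Longrightarrow> (\<lambda>w. emeasure (Q N w) A) \<in> borel_measurable P"
    and F: "finite F" "F \<noteq> {}" "F \<subseteq> sets borel"
    and concentration:
      "(\<lambda>N. enn2ereal (\<integral>\<^sup>+ w. e2ennreal (edist (elog (emeasure (Q N w) (\<Union>F)))
                (Max ((\<lambda>A. EE P (\<lambda>w'. elog (emeasure (Q N w') A))) ` F))) \<partial>P) / ereal (real N))
         \<longlonglongrightarrow> 0"
    and pieces: "\<And>A. A \<in> F \<Longrightarrow>
       eventually (\<lambda>N. EE P (\<lambda>w. elog (emeasure (Q N w) A)) / ereal (real N) < ereal B) sequentially"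
    and V: "V \<in> sets borel" "V \<subseteq> \<Union>F"
  shows "limsup (\<lambda>N. EE P (\<lambda>w. elog (emeasure (Q N w) V)) / ereal (real N)) \<le> ereal B"
proof (rule ereal_le_epsilon2)
  fix e :: real assume e: "0 < e"
  have UF: "\<Union>F \<in> sets borel" using F by (intro sets.finite_Union) auto
  have "eventually (\<lambda>N. \<forall>A\<in>F. EE P (\<lambda>w. elog (emeasure (Q N w) A)) / ereal (real N) < ereal B)
      sequentially"
    using F(1) pieces by (intro eventually_ball_finite) auto
  moreover have "eventually (\<lambda>N. enn2ereal (\<integral>\<^sup>+ w. e2ennreal (edist (elog (emeasure (Q N w) (\<Union>F)))
                (Max ((\<lambda>A. EE P (\<lambda>w'. elog (emeasure (Q N w') A))) ` F))) \<partial>P) / ereal (real N)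
                < ereal e) sequentially"
    using order_tendstoD(2)[OF concentration] e by simp
  ultimately have "eventually (\<lambda>N. EE P (\<lambda>w. elog (emeasure (Q N w) V)) / ereal (real N)
      \<le> ereal B + ereal e) sequentially"
    using eventually_ge_at_top[of 1]
  proof eventually_elim
    case (elim N)
    have "real N > 0" using elim(3) by simp
    from union_log_mass_step[OF prob _ random_Q[OF elim(3) UF] F(1,2) UF this elim(1,2) V]
    show ?case using borel_Q[OF elim(3)] by blast
  qed
  then show "limsup (\<lambda>N. EE P (\<lambda>w. elog (emeasure (Q N w) V)) / ereal (real N)) \<le> ereal B + ereal e"
    by (rule Limsup_bounded)
qed

text \<open>
  A half-space cover of S at level B: finitely many pairs (\<Lambda>, a) whose closed half-spaces
  {a \<le> <y,\<Lambda>>} cover S and satisfy I(\<Lambda>) < B + a, so that each half-space has exponential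
  mass at most B by the half-space bound.
\<close>

definition halfspace_cover ::
    "('a::euclidean_space \<Rightarrow> ereal) \<Rightarrow> real \<Rightarrow> 'a set \<Rightarrow> ('a \<times> real) set \<Rightarrow> bool" where
  "halfspace_cover I B S H \<longleftrightarrow>
     finite H \<and> (\<forall>(\<Lambda>, a)\<in>H. I \<Lambda> < ereal (B + a)) \<and> S \<subseteq> (\<Union>(\<Lambda>, a)\<in>H. {y. a \<le> y \<bullet> \<Lambda>})"

lemma halfspace_cover_Un:
  "halfspace_cover I B S H \<Longrightarrow> halfspace_cover I B T G \<Longrightarrow> halfspace_cover I B (S \<union> T) (H \<union> G)"
  unfolding halfspace_cover_def by blast

lemma Istar_less_imp_halfspace:
  assumes "Istar I x < ereal B"
  shows "\<exists>\<Lambda> a. a < x \<bullet> \<Lambda> \<and> I \<Lambda> < ereal (B + a)"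
proof -
  obtain \<Lambda> where L: "- ereal (x \<bullet> \<Lambda>) + I \<Lambda> < ereal B"
    using assms by (auto simp: Istar_def INF_less_iff)
  show ?thesis
  proof (cases "I \<Lambda>")
    case (real r)
    then have "r - B < x \<bullet> \<Lambda>" using L by simp
    then show ?thesis using real
      by (intro exI[of _ \<Lambda>] exI[of _ "(x \<bullet> \<Lambda> + r - B) / 2"]) (auto simp: field_simps)
  next
    case MInf
    then show ?thesis by (intro exI[of _ \<Lambda>] exI[of _ "x \<bullet> \<Lambda> - 1"]) auto
  qed (use L in simp)
qed

lemma halfspace_cover_compact:
  assumes "compact K" and less: "\<forall>x\<in>K. Istar I x < ereal B"
  shows "\<exists>H. halfspace_cover I B K H"
proof -
  have "\<exists>p. snd p < x \<bullet> fst p \<and> I (fst p) < ereal (B + snd p)" if x: "x \<in> K" for x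
  proof -
    obtain \<Lambda> a where "a < x \<bullet> \<Lambda>" "I \<Lambda> < ereal (B + a)"
      using Istar_less_imp_halfspace less x by blast
    then show ?thesis by (intro exI[of _ "(\<Lambda>, a)"]) simp
  qed
  then obtain g where g: "\<And>x. x \<in> K \<Longrightarrow> snd (g x) < x \<bullet> fst (g x) \<and> I (fst (g x)) < ereal (B + snd (g x))"
    by metis
  obtain C where C: "C \<subseteq> K" "finite C" "K \<subseteq> (\<Union>x\<in>C. {y. snd (g x) < y \<bullet> fst (g x)})"
  proof (rule compactE_image[OF \<open>compact K\<close>])
    show "open {y. snd (g x) < y \<bullet> fst (g x)}" for x
      by (intro open_Collect_less continuous_intros)
    show "K \<subseteq> (\<Union>x\<in>K. {y. snd (g x) < y \<bullet> fst (g x)})"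
      using g by auto
  qed blast
  have "halfspace_cover I B K (g ` C)"
    unfolding halfspace_cover_def using C g by (force intro: less_imp_le)
  then show ?thesis ..
qed

lemma outside_box_axis_halfspace:
  fixes y :: "'a::euclidean_space"
  assumes d: "d > 0" and y: "y \<notin> cbox (- (M *\<^sub>R One)) (M *\<^sub>R One)"
  shows "\<exists>s\<in>{1, -1}. \<exists>b\<in>Basis. d * M \<le> y \<bullet> ((s * d) *\<^sub>R b)"
proof -
  obtain b where b: "b \<in> Basis" "M < y \<bullet> b \<or> y \<bullet> b < - M"
    using y by (auto simp: mem_box not_le)
  from b(2) show ?thesis
  proof
    assume "M < y \<bullet> b"
    then have "d * M \<le> y \<bullet> ((1 * d) *\<^sub>R b)" using d by (simp add: mult_left_mono)
    then show ?thesis using b(1) by blast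
  next
    assume "y \<bullet> b < - M"
    then have "d * M \<le> d * - (y \<bullet> b)" using d by (intro mult_left_mono) auto
    then have "d * M \<le> y \<bullet> ((-1 * d) *\<^sub>R b)" by simp
    then show ?thesis using b(1) by blast
  qed
qed

lemma halfspace_cover_outside_box:
  fixes I :: "'a::euclidean_space \<Rightarrow> ereal"
  assumes "0 \<in> interior {\<Lambda>. I \<Lambda> < \<infinity>}"
  shows "\<exists>M H. halfspace_cover I B (- cbox (- (M *\<^sub>R One)) (M *\<^sub>R One)) H \<and> H \<noteq> {}"
proof -
  obtain \<delta> where \<delta>: "\<delta> > 0" "ball 0 \<delta> \<subseteq> {\<Lambda>. I \<Lambda> < \<infinity>}"
    using assms mem_interior by blast
  define d where "d = \<delta> / 2"
  have d: "d > 0" unfolding d_def using \<delta> by simp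
  define Dirs where "Dirs = (\<lambda>(s, b). (s * d) *\<^sub>R b) ` ({1, -1} \<times> (Basis :: 'a set))"
  have Dirs_finite: "finite Dirs" unfolding Dirs_def by simp
  have "eventually (\<lambda>M. \<forall>\<Lambda>\<in>Dirs. I \<Lambda> < ereal (B + d * M)) at_top"
  proof (rule eventually_ball_finite[OF Dirs_finite], rule ballI)
    fix \<Lambda> assume "\<Lambda> \<in> Dirs"
    then have "norm \<Lambda> = d" unfolding Dirs_def using d by auto
    then have "\<Lambda> \<in> ball 0 \<delta>" using \<delta>(1) unfolding d_def by simp
    then have fin: "I \<Lambda> < \<infinity>" using \<delta>(2) by blast
    show "eventually (\<lambda>M. I \<Lambda> < ereal (B + d * M)) at_top"
    proof (cases "I \<Lambda>")
      case (real r)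
      show ?thesis using eventually_gt_at_top[of "(r - B) / d"]
        by eventually_elim (use real d in \<open>simp add: field_simps\<close>)
    qed (use fin in auto)
  qed
  then obtain M where M: "\<And>\<Lambda>. \<Lambda> \<in> Dirs \<Longrightarrow> I \<Lambda> < ereal (B + d * M)"
    unfolding eventually_at_top_linorder by auto
  have "- cbox (- (M *\<^sub>R One)) (M *\<^sub>R One) \<subseteq> (\<Union>\<Lambda>\<in>Dirs. {y. d * M \<le> y \<bullet> \<Lambda>})"
    using outside_box_axis_halfspace[OF d] unfolding Dirs_def by fastforce
  then have "halfspace_cover I B (- cbox (- (M *\<^sub>R One)) (M *\<^sub>R One)) ((\<lambda>\<Lambda>. (\<Lambda>, d * M)) ` Dirs)"
    unfolding halfspace_cover_def using Dirs_finite M by auto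
  moreover have "Dirs \<noteq> {}" unfolding Dirs_def using nonempty_Basis by blast
  ultimately show ?thesis by blast
qed

lemma halfspace_cover_closed:
  fixes I :: "'a::euclidean_space \<Rightarrow> ereal"
  assumes "0 \<in> interior {\<Lambda>. I \<Lambda> < \<infinity>}" "closed V" and less: "\<forall>x\<in>V. Istar I x < ereal B"
  shows "\<exists>H. halfspace_cover I B V H \<and> H \<noteq> {}"
proof -
  obtain M G where G: "halfspace_cover I B (- cbox (- (M *\<^sub>R One)) (M *\<^sub>R One)) G" "G \<noteq> {}"
    using halfspace_cover_outside_box[OF assms(1)] by blast
  have "compact (V \<inter> cbox (- (M *\<^sub>R One)) (M *\<^sub>R One))"
    using \<open>closed V\<close> by (intro closed_Int_compact compact_cbox)
  then obtain H where "halfspace_cover I B (V \<inter> cbox (- (M *\<^sub>R One)) (M *\<^sub>R One)) H"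
    using halfspace_cover_compact less by blast
  from halfspace_cover_Un[OF this G(1)] have "halfspace_cover I B V (H \<union> G)"
    unfolding halfspace_cover_def by blast
  then show ?thesis using G(2) by blast
qed

lemma ereal_le_if_real_upper_bounds:
  fixes L S :: ereal
  assumes "\<And>B. S < ereal B \<Longrightarrow> L \<le> ereal B"
  shows "L \<le> S"
proof (rule ccontr)
  assume "\<not> L \<le> S"
  then obtain B where "S < ereal B" "ereal B < L"
    using ereal_dense2[of S L] by (auto simp: not_le)
  then show False using assms[of B] by (auto dest: leD)
qed

theorem mainTheorem9:
  fixes P :: "'w measure"
    and Q :: "nat \<Rightarrow> 'w \<Rightarrow> 'a::euclidean_space measure"
    and I :: "'a \<Rightarrow> ereal"
    and V :: "'a set"
  assumes prob: "prob_space P"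
    and borel_Q: "\<And>N w. N \<ge> 1 \<Longrightarrow> w \<in> space P \<Longrightarrow> sets (Q N w) = sets borel"
    and finite_Q: "\<And>N w. N \<ge> 1 \<Longrightarrow> w \<in> space P \<Longrightarrow> finite_measure (Q N w)"
    and random_Q: "\<And>N A. N \<ge> 1 \<Longrightarrow> A \<in> sets borel \<Longrightarrow>
                     (\<lambda>w. emeasure (Q N w) A) \<in> borel_measurable P"
    and cond_i: "\<And>\<A>. finite \<A> \<Longrightarrow> \<A> \<noteq> {} \<Longrightarrow> \<A> \<subseteq> sets borel \<Longrightarrow>
       (\<lambda>N. enn2ereal (\<integral>\<^sup>+ w. e2ennreal (edist (elog (emeasure (Q N w) (\<Union>\<A>)))
                (Max ((\<lambda>A. EE P (\<lambda>w'. elog (emeasure (Q N w') A))) ` \<A>))) \<partial>P) / ereal (real N))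
         \<longlonglongrightarrow> 0"
    and cond_ii: "\<And>\<Lambda>. (\<lambda>N. EE P (\<lambda>w. elog (LN N (Q N w) \<Lambda>)) / ereal (real N)) \<longlonglongrightarrow> I \<Lambda>"
    and cond_iii: "0 \<in> interior {\<Lambda>. I \<Lambda> < \<infinity>}"
    and closed_V: "closed V"
  shows "limsup (\<lambda>N. EE P (\<lambda>w. elog (emeasure (Q N w) V)) / ereal (real N))
           \<le> (SUP x\<in>V. Istar I x)"
proof (rule ereal_le_if_real_upper_bounds)
  fix B assume "(SUP x\<in>V. Istar I x) < ereal B"
  then have "\<forall>x\<in>V. Istar I x < ereal B"
    by (meson SUP_upper le_less_trans)
  then obtain H where H: "halfspace_cover I B V H" "H \<noteq> {}"
    using halfspace_cover_closed[OF cond_iii closed_V] by blast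
  define F where "F = (\<lambda>(\<Lambda>, a). {y. a \<le> y \<bullet> \<Lambda>}) ` H"
  have halfspace_borel: "{y::'a. a \<le> y \<bullet> \<Lambda>} \<in> sets borel" for a \<Lambda>
    by measurable
  have F: "finite F" "F \<noteq> {}" "F \<subseteq> sets borel"
    using H halfspace_borel unfolding F_def halfspace_cover_def by auto
  have pieces: "eventually (\<lambda>N. EE P (\<lambda>w. elog (emeasure (Q N w) A)) / ereal (real N) < ereal B)
      sequentially" if A_F: "A \<in> F" for A
  proof -
    obtain \<Lambda> a where "(\<Lambda>, a) \<in> H" and A: "A = {y. a \<le> y \<bullet> \<Lambda>}"
      using A_F unfolding F_def by force
    then have "I \<Lambda> < ereal (B + a)"
      using H(1) unfolding halfspace_cover_def by auto
    from halfspace_log_mass_bound[OF prob _ _ cond_ii this] show ?thesis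
      unfolding A using borel_Q random_Q by blast
  qed
  have V_F: "V \<subseteq> \<Union>F"
    using H(1) unfolding F_def halfspace_cover_def by auto
  from union_log_mass_bound[OF prob _ _ F cond_i[OF F] pieces borel_closed[OF closed_V] V_F]
  show "limsup (\<lambda>N. EE P (\<lambda>w. elog (emeasure (Q N w) V)) / ereal (real N)) \<le> ereal B"
    using borel_Q random_Q by blast
qed

end
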